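(* Assume that $Q$ spans $E$ as a vector space, that $f$ is surjective, and that $R\cap f^{-1}(C)$ and $f^{-1}(C)$ span the same vector subspace of $E$. Then there exist $y_0\in\mathbb{R}^n$ and $c\in\mathbb{R}$ such that for every $y\in f(R)+C$: $$b_{Q,f,\ell,C}(y-y_0)-c\;\le\;b'_{Q,R,f,\ell,C}(y)\;\le\;b_{Q,f,\ell,C}(y),$$ with the conventions $-\infty-c=-\infty$, $+\infty-c=+\infty$.
   Context: $E$ is a finite-dimensional Euclidean space, $Q\subset E$ a convex cone (nonempty, stable under addition and multiplication by nonnegative reals), $f:E\to\mathbb{R}^n$ a linear map, $\ell:E\to\mathbb{R}$ a linear form, $C\subset\mathbb{R}^n$ a convex cone, and $R\subset E$ a lattice (an additive subgroup generated by a basis of $E$). Define $b_{Q,f,\ell,C}(y)=\sup\{\ell(x):x\in Q,\ y-f(x)\in C\}$ and $b'_{Q,R,f,\ell,C}(y)=\sup\{\ell(x):x\in Q\cap R,\ y-f(x)\in C\}$ for $y\in\mathbb{R}^n$, with $\sup\emptyset=-\infty$ and the supremum of an unbounded set equal to $+\infty$. $f(R)+C=\{f(r)+c:r\in R,c\in C\}$. *)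

theory Defs
  imports "HOL-Analysis.Analysis"
begin

definition is_lattice :: "'a::euclidean_space set \<Rightarrow> bool" where
  "is_lattice R \<longleftrightarrow> (\<exists>B. finite B \<and> independent B \<and> span B = UNIV \<and>
      R = {\<Sum>b\<in>B. of_int (k b) *\<^sub>R b | k. True})"

text \<open>Value function b_{Q,f,l,C}: supremum in the extended reals
  (Sup of the empty set is -infinity, of an unbounded set +infinity).\<close>
definition bval :: "'a::euclidean_space set \<Rightarrow> ('a \<Rightarrow> 'b::real_vector) \<Rightarrow> ('a \<Rightarrow> real)
    \<Rightarrow> 'b set \<Rightarrow> 'b \<Rightarrow> ereal" where
  "bval Q f l C y = Sup {ereal (l x) | x. x \<in> Q \<and> y - f x \<in> C}"

definition bval_int :: "'a::euclidean_space set \<Rightarrow> 'a set \<Rightarrow> ('a \<Rightarrow> 'b::real_vector)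
    \<Rightarrow> ('a \<Rightarrow> real) \<Rightarrow> 'b set \<Rightarrow> 'b \<Rightarrow> ereal" where
  "bval_int Q R f l C y = Sup {ereal (l x) | x. x \<in> Q \<inter> R \<and> y - f x \<in> C}"

end

theory Submission
  imports Defs
begin

(* Pick a basis B of span (f -` C) inside the lattice points R \<inter> f -` C
   (possible by the spanning hypothesis).  Since Q is a full-dimensional convex cone it
   contains a translate w + ball 0 M for M = \<Sum>b\<in>B. norm b.  Take y0 = f w.  Given a real
   feasible point x for the right-hand side y - y0, where y = f r0 + z0, the difference
   d = r0 - x - w lies in span (f -` C) = span B; rounding its B-coordinates up gives
   d = lam - q with lam an integer combination of B (so lam \<in> R) and q a [0,1]-combination
   of B (so norm q \<le> M and f q \<in> C).  Then r = r0 - lam = x + (w - q) lies in Q \<inter> R, is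
   feasible for y, and l x \<le> l r + c with c = \<bar>K\<bar> * M - l w, K a bound for l.
   The file first collects facts on lattices, cones, rounding in a span and suprema in the
   extended reals, then proves this rounding step, and finally the theorem. *)

lemma lattice_zero_add_scale:
  assumes "is_lattice R"
  shows lattice_zero: "0 \<in> R"
    and lattice_add: "\<And>x y. x \<in> R \<Longrightarrow> y \<in> R \<Longrightarrow> x + y \<in> R"
    and lattice_int_scale: "\<And>x n. x \<in> R \<Longrightarrow> of_int n *\<^sub>R x \<in> R"
proof -
  obtain B where R: "R = {\<Sum>b\<in>B. of_int (k b) *\<^sub>R b | k. True}"
    using assms unfolding is_lattice_def by blast
  show "0 \<in> R" unfolding R by (intro CollectI exI[of _ "\<lambda>_. 0"]) simp
  show "x + y \<in> R" if xy: "x \<in> R" "y \<in> R" for x y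
  proof -
    obtain k1 k2 where "x = (\<Sum>b\<in>B. of_int (k1 b) *\<^sub>R b)" "y = (\<Sum>b\<in>B. of_int (k2 b) *\<^sub>R b)"
      using xy unfolding R by blast
    then have "x + y = (\<Sum>b\<in>B. of_int (k1 b + k2 b) *\<^sub>R b)"
      by (simp add: sum.distrib scaleR_add_left)
    then show ?thesis unfolding R by (intro CollectI exI[of _ "\<lambda>b. k1 b + k2 b"]) simp
  qed
  show "of_int n *\<^sub>R x \<in> R" if x: "x \<in> R" for x n
  proof -
    obtain k where "x = (\<Sum>b\<in>B. of_int (k b) *\<^sub>R b)"
      using x unfolding R by blast
    then have "of_int n *\<^sub>R x = (\<Sum>b\<in>B. of_int (n * k b) *\<^sub>R b)"
      by (simp add: scaleR_sum_right)
    then show ?thesis unfolding R by (intro CollectI exI[of _ "\<lambda>b. n * k b"]) simp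
  qed
qed

lemma lattice_diff:
  assumes "is_lattice R" "x \<in> R" "y \<in> R"
  shows "x - y \<in> R"
  using lattice_add[OF assms(1,2) lattice_int_scale[OF assms(1,3), of "-1"]] by simp

lemma lattice_int_comb:
  assumes "is_lattice R" "finite B" "B \<subseteq> R"
  shows "(\<Sum>b\<in>B. of_int (k b) *\<^sub>R b) \<in> R"
  using assms(2,3)
  by (induction B rule: finite_induct)
     (simp_all add: lattice_zero lattice_add lattice_int_scale assms(1))

lemma convex_cone_nonneg_comb:
  assumes "convex_cone C" "finite B" "\<And>b. b \<in> B \<Longrightarrow> 0 \<le> g b \<and> v b \<in> C"
  shows "(\<Sum>b\<in>B. g b *\<^sub>R v b) \<in> C"
  using assms(2,3)
  by (induction B rule: finite_induct) (use assms(1) in \<open>simp_all add: convex_cone_iff\<close>)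

text \<open>A convex cone spanning the whole space has nonempty interior, hence (scaling an
  interior ball) contains a translate of every ball around the origin.\<close>
lemma convex_cone_contains_translated_ball:
  fixes Q :: "'a::euclidean_space set"
  assumes "convex_cone Q" "span Q = UNIV" "M \<ge> 0"
  shows "\<exists>w. \<forall>v. norm v \<le> M \<longrightarrow> w + v \<in> Q"
proof -
  have "affine hull Q = UNIV"
    using affine_hull_span_0[OF hull_inc[OF convex_cone_contains_0[OF assms(1)]]] assms(2)
    by (rule trans)
  then have "rel_interior Q = interior Q" by (rule rel_interior_interior)
  moreover have "convex Q" using assms(1) unfolding convex_cone_def by blast
  then have "rel_interior Q \<noteq> {}"
    using rel_interior_eq_empty convex_cone_nonempty[OF assms(1)] by blast
  ultimately obtain q where "q \<in> interior Q" by auto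
  then obtain e where e: "e > 0" "ball q e \<subseteq> Q" using mem_interior by blast
  define s where "s = (M + 1) / e"
  have s: "s > 0" using e assms(3) by (simp add: s_def)
  have "s *\<^sub>R q + v \<in> Q" if v: "norm v \<le> M" for v
  proof -
    have "norm ((1/s) *\<^sub>R v) \<le> M / s" using v s by (simp add: divide_right_mono)
    also have "\<dots> < e" using s e assms(3) by (simp add: s_def field_simps)
    finally have "q + (1/s) *\<^sub>R v \<in> Q" using e(2) by (auto simp: dist_norm)
    then have "s *\<^sub>R (q + (1/s) *\<^sub>R v) \<in> Q" using convex_cone_scaleR[OF assms(1)] s by simp
    then show ?thesis using s by (simp add: scaleR_add_right)
  qed
  then show ?thesis by blast
qed

text \<open>Rounding coordinates up: a vector in the span of finitely many lattice points is a
  lattice point minus a combination of those points with coefficients in [0,1].\<close>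
lemma span_round_to_lattice:
  assumes "is_lattice R" "finite B" "B \<subseteq> R" "d \<in> span B"
  shows "\<exists>lam g. lam \<in> R \<and> d = lam - (\<Sum>b\<in>B. g b *\<^sub>R b) \<and> (\<forall>b. 0 \<le> g b \<and> g b \<le> 1)"
proof -
  obtain a where a: "d = (\<Sum>b\<in>B. a b *\<^sub>R b)" using assms(4) span_finite[OF assms(2)] by auto
  define g where "g b = of_int (ceiling (a b)) - a b" for b
  define lam where "lam = (\<Sum>b\<in>B. of_int (ceiling (a b)) *\<^sub>R b)"
  have "d = lam - (\<Sum>b\<in>B. g b *\<^sub>R b)"
    unfolding a lam_def g_def by (simp add: sum_subtractf[symmetric] scaleR_diff_left)
  moreover have "0 \<le> g b" "g b \<le> 1" for b
    unfolding g_def by (simp_all add: le_of_int_ceiling) linarith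
  moreover have "lam \<in> R" unfolding lam_def by (rule lattice_int_comb[OF assms(1-3)])
  ultimately show ?thesis by blast
qed

lemma norm_unit_comb_le:
  assumes "\<And>b. 0 \<le> g b \<and> g b \<le> 1"
  shows "norm (\<Sum>b\<in>B. g b *\<^sub>R b) \<le> (\<Sum>b\<in>B. norm b)"
proof -
  have "norm (\<Sum>b\<in>B. g b *\<^sub>R b) \<le> (\<Sum>b\<in>B. norm (g b *\<^sub>R b))" by (rule norm_sum)
  also have "\<dots> \<le> (\<Sum>b\<in>B. norm b)"
    using assms by (intro sum_mono) (simp add: mult_left_le_one_le)
  finally show ?thesis .
qed

text \<open>For surjective linear f and a cone C, every vector whose image is a difference of
  two points of C lies in the span of f -` C (the kernel of f is contained in f -` C).\<close>
lemma image_diff_in_span_preimage: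
  assumes "linear f" "surj f" "0 \<in> C" "f d = z1 - z2" "z1 \<in> C" "z2 \<in> C"
  shows "d \<in> span (f -` C)"
proof -
  obtain u1 u2 where u: "f u1 = z1" "f u2 = z2" using assms(2) by (metis surjD)
  have "f (d - u1 + u2) = 0" using u assms(4) by (simp add: linear_diff[OF assms(1)] linear_add[OF assms(1)])
  then have "d - u1 + u2 \<in> f -` C" "u1 \<in> f -` C" "u2 \<in> f -` C" using u assms(3,5,6) by auto
  then have "(d - u1 + u2) + u1 - u2 \<in> span (f -` C)" by (meson span_add span_diff span_base)
  then show ?thesis by simp
qed

lemma Sup_shift_le:
  assumes "\<And>x. P x \<Longrightarrow> \<exists>r. P' r \<and> g x \<le> h r + c"
  shows "Sup {ereal (g x) | x. P x} - ereal c \<le> Sup {ereal (h r) | r. P' r}"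
proof -
  have "Sup {ereal (g x) | x. P x} \<le> Sup {ereal (h r) | r. P' r} + ereal c"
  proof (rule Sup_least)
    fix s assume "s \<in> {ereal (g x) | x. P x}"
    then obtain x r where "s = ereal (g x)" "P' r" "g x \<le> h r + c" using assms by blast
    then have "s \<le> ereal (h r) + ereal c" by simp
    also have "\<dots> \<le> Sup {ereal (h r) | r. P' r} + ereal c"
      using \<open>P' r\<close> by (intro add_right_mono Sup_upper) blast
    finally show "s \<le> Sup {ereal (h r) | r. P' r} + ereal c" .
  qed
  then show ?thesis by (simp add: ereal_minus_le)
qed

lemma round_feasible_point:
  assumes fl: "linear f" and ll: "linear l" and Qc: "convex_cone Q" and Cc: "convex_cone C"
    and lat: "is_lattice R" and "surj f"
    and B: "finite B" "B \<subseteq> R \<inter> f -` C" "span (f -` C) \<subseteq> span B"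
    and w: "\<And>v. norm v \<le> (\<Sum>b\<in>B. norm b) \<Longrightarrow> w + v \<in> Q"
    and K: "\<And>x. norm (l x) \<le> K * norm x"
    and y: "r0 \<in> R" "z0 \<in> C" and x: "x \<in> Q" "f r0 + z0 - f w - f x \<in> C"
  shows "\<exists>r. r \<in> Q \<inter> R \<and> f r0 + z0 - f r \<in> C \<and>
              l x \<le> l r + (\<bar>K\<bar> * (\<Sum>b\<in>B. norm b) - l w)"
proof -
  define M where "M = (\<Sum>b\<in>B. norm b)"
  define z where "z = f r0 + z0 - f w - f x"
  have "f (r0 - x - w) = f r0 - f x - f w" by (simp add: linear_diff[OF fl])
  then have "f (r0 - x - w) = z - z0" unfolding z_def by (simp add: algebra_simps)
  moreover have "0 \<in> C" by (rule convex_cone_contains_0[OF Cc])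
  ultimately have "r0 - x - w \<in> span (f -` C)"
    using image_diff_in_span_preimage[OF fl \<open>surj f\<close>] x(2) y(2) unfolding z_def by blast
  then obtain lam g where lam: "lam \<in> R" "r0 - x - w = lam - (\<Sum>b\<in>B. g b *\<^sub>R b)"
    and g: "\<And>b. 0 \<le> g b \<and> g b \<le> 1"
    using span_round_to_lattice[OF lat B(1)] B(2,3) by blast
  define q where "q = (\<Sum>b\<in>B. g b *\<^sub>R b)"
  define r where "r = r0 - lam"
  have r: "r = x + (w - q)" using lam(2) unfolding r_def q_def by (simp add: algebra_simps)
  have nq: "norm q \<le> M" unfolding q_def M_def by (rule norm_unit_comb_le[OF g])
  have "r \<in> Q" unfolding r using convex_cone_add[OF Qc x(1)] w[of "- q"] nq M_def by simp
  moreover have "r \<in> R" unfolding r_def using lattice_diff[OF lat y(1) lam(1)] .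
  moreover have "f r0 + z0 - f r \<in> C"
  proof -
    have "f q = (\<Sum>b\<in>B. g b *\<^sub>R f b)"
      unfolding q_def by (simp add: linear_sum[OF fl] linear_scale[OF fl])
    then have "f q \<in> C" using g B(2) by (auto intro: convex_cone_nonneg_comb[OF Cc B(1)])
    then have "z + f q \<in> C" using convex_cone_add[OF Cc] x(2) unfolding z_def by blast
    moreover have "f r0 + z0 - f r = z + f q"
      unfolding r z_def by (simp add: linear_add[OF fl] linear_diff[OF fl] algebra_simps)
    ultimately show ?thesis by metis
  qed
  moreover have "l x \<le> l r + (\<bar>K\<bar> * M - l w)"
  proof -
    have "l q \<le> K * norm q" using K[of q] by simp
    also have "\<dots> \<le> \<bar>K\<bar> * M" using nq by (meson abs_ge_self abs_ge_zero mult_mono norm_ge_zero order.trans)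
    finally show ?thesis unfolding r by (simp add: linear_add[OF ll] linear_diff[OF ll])
  qed
  ultimately show ?thesis unfolding M_def by blast
qed

theorem proposition2p3:
  fixes Q R :: "'a::euclidean_space set"
    and f :: "'a \<Rightarrow> real^'n"
    and l :: "'a \<Rightarrow> real"
    and C :: "(real^'n) set"
  assumes "convex_cone Q"
    and "linear f"
    and "linear l"
    and "convex_cone C"
    and "is_lattice R"
    and "span Q = UNIV"
    and "surj f"
    and "span (R \<inter> f -` C) = span (f -` C)"
  shows "\<exists>y0 c. \<forall>y \<in> {f r + z | r z. r \<in> R \<and> z \<in> C}.
           bval Q f l C (y - y0) - ereal c \<le> bval_int Q R f l C y \<and>
           bval_int Q R f l C y \<le> bval Q f l C y"
proof -
  obtain B where B: "B \<subseteq> R \<inter> f -` C" "independent B" "R \<inter> f -` C \<subseteq> span B"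
    using maximal_independent_subset by blast
  have finB: "finite B" using B(2) finiteI_independent by blast
  have spanB: "span (f -` C) \<subseteq> span B"
    using B(3) assms(8) by (metis span_minimal subspace_span)
  obtain w where w: "\<And>v. norm v \<le> (\<Sum>b\<in>B. norm b) \<Longrightarrow> w + v \<in> Q"
    using convex_cone_contains_translated_ball[OF assms(1,6)] by (meson norm_ge_zero sum_nonneg)
  obtain K where K: "\<And>x. norm (l x) \<le> K * norm x" using linear_bounded[OF assms(3)] by blast
  show ?thesis
  proof (intro exI ballI conjI)
    fix y assume "y \<in> {f r + z | r z. r \<in> R \<and> z \<in> C}"
    then obtain r0 z0 where y: "y = f r0 + z0" "r0 \<in> R" "z0 \<in> C" by blast
    show "bval Q f l C (y - f w) - ereal (\<bar>K\<bar> * (\<Sum>b\<in>B. norm b) - l w) \<le> bval_int Q R f l C y"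
      unfolding bval_def bval_int_def y(1)
      using round_feasible_point[OF assms(2,3,1,4,5,7) finB B(1) spanB w K y(2,3)]
      by (intro Sup_shift_le) (simp add: algebra_simps)
    show "bval_int Q R f l C y \<le> bval Q f l C y"
      unfolding bval_int_def bval_def by (rule Sup_subset_mono) blast
  qed
qed

end
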